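(* Let $\zeta\in(0,\infty)$ and for each $n\in\mathbb N$ let $(h_n,w^{(n)})\in\boldsymbol\Sigma([0,\zeta])$, converging to $(h,w)$ in $\mathbf C([0,\zeta],\mathbb R)\times\mathbf C([0,\zeta],\mathbf C_0)$ for the metric $\Delta$. Then $\lim_{n\to\infty}\lVert d_{h_n}-d_h\rVert=\lim_{n\to\infty}\lVert d_{h_n,w^{(n)}}-d_{h,w}\rVert=0$, where $\lVert\cdot\rVert$ is the uniform norm on $[0,\zeta]^2$.
   Context: $\mathbf C_0$: continuous functions $[0,\infty)\to\mathbb R$ with metric $\delta_{\mathtt u}(w,w')=\sum_{n\ge0}2^{-n-1}\min(1,\sup_{[0,n]}|w-w'|)$. $\Delta((h,w),(h',w'))=\sup_{[0,\zeta]}|h-h'|+\sup_{s\in[0,\zeta]}\delta_{\mathtt u}(w_s,w'_s)$. A snake $(h,w)\in\boldsymbol\Sigma([0,\zeta])$: $h\in\mathbf C([0,\zeta],\mathbb R)$, $h\ge0$, $h(0)=h(\zeta)=0$, $s\mapsto w_s\in\mathbf C_0$ continuous, with $w_s(r)=w_s(h(s))=:\widehat w_s$ for $r\ge h(s)$, and $w_{s_1}(r)=w_{s_2}(r)$ for all $r\in[0,m_h(s_1,s_2)]$, where $m_h(s_1,s_2)=\min_{[s_1\wedge s_2,s_1\vee s_2]}h$. Tree pseudo-metric $d_h(s_1,s_2)=h(s_1)+h(s_2)-2m_h(s_1,s_2)$. Snake metric: $M_{h,w}(s_1,s_2)=\min\big(\min_{r\in[m_h(s_1,s_2),h(s_1)]}w_{s_1}(r),\min_{r\in[m_h(s_1,s_2),h(s_2)]}w_{s_2}(r)\big)$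 and $d_{h,w}(s_1,s_2)=\widehat w_{s_1}+\widehat w_{s_2}-2M_{h,w}(s_1,s_2)$. *)

theory Defs
  imports "HOL-Analysis.Analysis"
begin

text \<open>Elements of C_0 are represented as functions real => real, continuous on [0,oo).
  Paths s |-> w_s are functions real => (real => real); only values on [0,zeta] matter.\<close>

definition C0 :: "(real \<Rightarrow> real) \<Rightarrow> bool" where
  "C0 v \<longleftrightarrow> continuous_on {0..} v"

definition delta_u :: "(real \<Rightarrow> real) \<Rightarrow> (real \<Rightarrow> real) \<Rightarrow> real" where
  "delta_u v v' = (\<Sum>n. (1/2) ^ (n+1) * min 1 (SUP r\<in>{0..real n}. \<bar>v r - v' r\<bar>))"

definition path_cont :: "real \<Rightarrow> (real \<Rightarrow> real \<Rightarrow> real) \<Rightarrow> bool" where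
  "path_cont \<zeta> w \<longleftrightarrow> (\<forall>s\<in>{0..\<zeta>}. \<forall>e>0. \<exists>d>0. \<forall>s'\<in>{0..\<zeta>}.
      \<bar>s' - s\<bar> < d \<longrightarrow> delta_u (w s') (w s) < e)"

definition Delta :: "real \<Rightarrow> (real \<Rightarrow> real) \<times> (real \<Rightarrow> real \<Rightarrow> real)
    \<Rightarrow> (real \<Rightarrow> real) \<times> (real \<Rightarrow> real \<Rightarrow> real) \<Rightarrow> real" where
  "Delta \<zeta> p q = (SUP s\<in>{0..\<zeta>}. \<bar>fst p s - fst q s\<bar>)
                 + (SUP s\<in>{0..\<zeta>}. delta_u (snd p s) (snd q s))"

definition m_h :: "(real \<Rightarrow> real) \<Rightarrow> real \<Rightarrow> real \<Rightarrow> real" where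
  "m_h h s1 s2 = (INF t\<in>{min s1 s2..max s1 s2}. h t)"

definition d_tree :: "(real \<Rightarrow> real) \<Rightarrow> real \<Rightarrow> real \<Rightarrow> real" where
  "d_tree h s1 s2 = h s1 + h s2 - 2 * m_h h s1 s2"

definition is_snake :: "real \<Rightarrow> (real \<Rightarrow> real) \<Rightarrow> (real \<Rightarrow> real \<Rightarrow> real) \<Rightarrow> bool" where
  "is_snake \<zeta> h w \<longleftrightarrow>
     continuous_on {0..\<zeta>} h \<and> (\<forall>s\<in>{0..\<zeta>}. h s \<ge> 0) \<and> h 0 = 0 \<and> h \<zeta> = 0 \<and>
     (\<forall>s\<in>{0..\<zeta>}. C0 (w s)) \<and> path_cont \<zeta> w \<and>
     (\<forall>s\<in>{0..\<zeta>}. \<forall>r\<ge>h s. w s r = w s (h s)) \<and>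
     (\<forall>s1\<in>{0..\<zeta>}. \<forall>s2\<in>{0..\<zeta>}. \<forall>r\<in>{0..m_h h s1 s2}. w s1 r = w s2 r)"

definition M_hw :: "(real \<Rightarrow> real) \<Rightarrow> (real \<Rightarrow> real \<Rightarrow> real) \<Rightarrow> real \<Rightarrow> real \<Rightarrow> real" where
  "M_hw h w s1 s2 = min (INF r\<in>{m_h h s1 s2..h s1}. w s1 r) (INF r\<in>{m_h h s1 s2..h s2}. w s2 r)"

definition d_snake :: "(real \<Rightarrow> real) \<Rightarrow> (real \<Rightarrow> real \<Rightarrow> real) \<Rightarrow> real \<Rightarrow> real \<Rightarrow> real" where
  "d_snake h w s1 s2 = w s1 (h s1) + w s2 (h s2) - 2 * M_hw h w s1 s2"

end

theory Submission
  imports Defs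
begin

(* Both distances are built from h and w by pointwise operations and by infima over intervals
   whose endpoints are values of h.  Uniform convergence h_n -> h moves these endpoints, and the
   minima m_h, by at most sup |h_n - h|, so d_{h_n} -> d_h uniformly.  Convergence in delta_u,
   uniformly in s, gives uniform convergence w^(n)_s(r) -> w_s(r) for r in a compact [0,k]; and
   since (s,r) |-> w_s(r) is jointly continuous on the compact [0,zeta] x [0,k], the paths w_s are
   uniformly equicontinuous there.  Hence the infima of w^(n)_s over the perturbed intervals stay
   uniformly close to those of w_s, and d_{h_n,w^(n)} -> d_{h,w} uniformly. *)

lemma continuous_on_bdd_image_Icc:
  fixes f :: "real \<Rightarrow> real"
  assumes "continuous_on S f" "{a..b} \<subseteq> S"
  shows "bdd_below (f ` {a..b})" "bdd_above (f ` {a..b})"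
proof -
  have "compact (f ` {a..b})"
    using assms continuous_on_subset compact_continuous_image compact_Icc by blast
  then show "bdd_below (f ` {a..b})" "bdd_above (f ` {a..b})"
    by (auto intro: bounded_imp_bdd_below bounded_imp_bdd_above compact_imp_bounded)
qed

lemma continuous_on_Icc_nat_bound:
  fixes h :: "real \<Rightarrow> real"
  assumes "continuous_on {a..b} h"
  obtains K :: nat where "\<And>s. s \<in> {a..b} \<Longrightarrow> h s + 1 \<le> real K"
proof -
  obtain M where M: "\<And>s. s \<in> {a..b} \<Longrightarrow> h s \<le> M"
    using continuous_on_bdd_image_Icc(2)[OF assms order_refl] unfolding bdd_above_def by blast
  obtain K :: nat where "M + 1 \<le> real K" using real_arch_simple by blast
  with M show ?thesis by (intro that[of K]) force
qed

lemma C0_continuous_on_Icc: "C0 v \<Longrightarrow> continuous_on {0..K} v"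
  unfolding C0_def by (rule continuous_on_subset) auto

lemma cINF_abs_diff_le:
  fixes f g :: "'a \<Rightarrow> real"
  assumes "A \<noteq> {}" "B \<noteq> {}" "bdd_below (f ` A)" "bdd_below (g ` B)"
    and AB: "\<And>x. x \<in> A \<Longrightarrow> \<exists>y\<in>B. \<bar>f x - g y\<bar> \<le> e"
    and BA: "\<And>y. y \<in> B \<Longrightarrow> \<exists>x\<in>A. \<bar>f x - g y\<bar> \<le> e"
  shows "\<bar>(INF x\<in>A. f x) - (INF y\<in>B. g y)\<bar> \<le> e"
proof -
  have "(INF x\<in>A. f x) - e \<le> (INF y\<in>B. g y)"
  proof (rule cINF_greatest[OF assms(2)])
    fix y assume "y \<in> B"
    then obtain x where "x \<in> A" "\<bar>f x - g y\<bar> \<le> e" using BA by blast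
    moreover have "(INF x\<in>A. f x) \<le> f x" using cINF_lower[OF assms(3) \<open>x \<in> A\<close>] .
    ultimately show "(INF x\<in>A. f x) - e \<le> g y" by linarith
  qed
  moreover have "(INF y\<in>B. g y) - e \<le> (INF x\<in>A. f x)"
  proof (rule cINF_greatest[OF assms(1)])
    fix x assume "x \<in> A"
    then obtain y where "y \<in> B" "\<bar>f x - g y\<bar> \<le> e" using AB by blast
    moreover have "(INF y\<in>B. g y) \<le> g y" using cINF_lower[OF assms(4) \<open>y \<in> B\<close>] .
    ultimately show "(INF y\<in>B. g y) - e \<le> f x" by linarith
  qed
  ultimately show ?thesis by linarith
qed

lemma Icc_close_point:
  fixes a b a' b' x :: real
  assumes "a' \<le> b'" "\<bar>a - a'\<bar> \<le> \<delta>" "\<bar>b - b'\<bar> \<le> \<delta>" "x \<in> {a..b}"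
  shows "\<exists>y\<in>{a'..b'}. \<bar>x - y\<bar> \<le> \<delta>"
  using assms by (intro bexI[of _ "max a' (min b' x)"]) (auto simp: abs_le_iff max_def min_def)

lemma abs_INF_Icc_diff_le:
  fixes f g :: "real \<Rightarrow> real"
  assumes "a \<le> b" "a' \<le> b'" "{a..b} \<subseteq> I" "{a'..b'} \<subseteq> I" "\<bar>a - a'\<bar> \<le> \<delta>" "\<bar>b - b'\<bar> \<le> \<delta>"
    and "bdd_below (f ` {a..b})" "bdd_below (g ` {a'..b'})"
    and modulus: "\<And>x y. x \<in> I \<Longrightarrow> y \<in> I \<Longrightarrow> \<bar>x - y\<bar> \<le> \<delta> \<Longrightarrow> \<bar>f x - f y\<bar> \<le> e"
    and close: "\<And>x. x \<in> I \<Longrightarrow> \<bar>f x - g x\<bar> \<le> e"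
  shows "\<bar>(INF x\<in>{a..b}. f x) - (INF y\<in>{a'..b'}. g y)\<bar> \<le> 2 * e"
proof -
  have close_pair: "\<bar>f x - g y\<bar> \<le> 2 * e"
    if "x \<in> {a..b}" "y \<in> {a'..b'}" "\<bar>x - y\<bar> \<le> \<delta>" for x y
  proof -
    have "x \<in> I" "y \<in> I" using that assms(3,4) by auto
    then have "\<bar>f x - f y\<bar> \<le> e" "\<bar>f y - g y\<bar> \<le> e" using modulus that(3) close by auto
    then show ?thesis by arith
  qed
  show ?thesis
  proof (rule cINF_abs_diff_le)
    fix x assume "x \<in> {a..b}"
    then show "\<exists>y\<in>{a'..b'}. \<bar>f x - g y\<bar> \<le> 2 * e"
      using Icc_close_point[OF assms(2,5,6)] close_pair by blast
  next
    fix y assume "y \<in> {a'..b'}"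
    moreover have "\<bar>a' - a\<bar> \<le> \<delta>" "\<bar>b' - b\<bar> \<le> \<delta>"
      using assms(5,6) by (simp_all add: abs_minus_commute)
    ultimately obtain x where "x \<in> {a..b}" "\<bar>y - x\<bar> \<le> \<delta>"
      using Icc_close_point[OF assms(1)] by blast
    then show "\<exists>x\<in>{a..b}. \<bar>f x - g y\<bar> \<le> 2 * e"
      using close_pair \<open>y \<in> {a'..b'}\<close> by (metis abs_minus_commute)
  qed (use assms in auto)
qed

lemma abs_min_diff_le:
  fixes a b c d :: real
  shows "\<bar>a - c\<bar> \<le> e \<Longrightarrow> \<bar>b - d\<bar> \<le> e \<Longrightarrow> \<bar>min a b - min c d\<bar> \<le> e"
  by (auto simp: abs_le_iff min_def)

lemma uniform_limit_if_dist_le: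
  assumes "(g \<longlongrightarrow> 0) F" "\<And>n x. x \<in> S \<Longrightarrow> dist (f n x) (l x) \<le> g n"
  shows "uniform_limit S f l F"
proof (rule uniform_limitI)
  fix e :: real assume "e > 0"
  then have "\<forall>\<^sub>F n in F. g n < e" using order_tendstoD(2)[OF assms(1)] by blast
  then show "\<forall>\<^sub>F n in F. \<forall>x\<in>S. dist (f n x) (l x) < e"
    by eventually_elim (use assms(2) le_less_trans in blast)
qed

lemma uniform_limit_nonneg:
  fixes f :: "nat \<Rightarrow> 'a \<Rightarrow> real"
  assumes "uniform_limit S f l sequentially" "\<And>n x. x \<in> S \<Longrightarrow> 0 \<le> f n x" "x \<in> S"
  shows "0 \<le> l x"
  using tendsto_uniform_limitI[OF assms(1,3)] assms(2)[OF assms(3)] by (intro LIMSEQ_le_const) auto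

lemma uniform_limit_imp_SUP_abs_diff_tendsto_0:
  fixes f :: "'b \<Rightarrow> 'a \<Rightarrow> real"
  assumes "uniform_limit S f l F" "S \<noteq> {}"
  shows "((\<lambda>n. SUP x\<in>S. \<bar>f n x - l x\<bar>) \<longlongrightarrow> 0) F"
proof (rule tendstoI)
  fix e :: real assume "e > 0"
  have "\<forall>\<^sub>F n in F. \<forall>x\<in>S. dist (f n x) (l x) < e / 2"
    by (rule uniform_limitD[OF assms(1)]) (use \<open>e > 0\<close> in simp)
  then show "\<forall>\<^sub>F n in F. dist (SUP x\<in>S. \<bar>f n x - l x\<bar>) 0 < e"
  proof eventually_elim
    case (elim n)
    then have bound: "\<And>x. x \<in> S \<Longrightarrow> \<bar>f n x - l x\<bar> \<le> e / 2"
      by (force simp: dist_real_def)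
    then have "bdd_above ((\<lambda>x. \<bar>f n x - l x\<bar>) ` S)" by (intro bdd_aboveI2) blast
    moreover obtain x where "x \<in> S" using assms(2) by blast
    ultimately have "0 \<le> (SUP x\<in>S. \<bar>f n x - l x\<bar>)"
      by (meson abs_ge_zero cSUP_upper order_trans)
    moreover have "(SUP x\<in>S. \<bar>f n x - l x\<bar>) \<le> e / 2"
      using bound assms(2) by (intro cSUP_least) auto
    ultimately show ?case using \<open>e > 0\<close> by (simp add: dist_real_def)
  qed
qed

definition delta_u_term :: "(real \<Rightarrow> real) \<Rightarrow> (real \<Rightarrow> real) \<Rightarrow> nat \<Rightarrow> real" where
  "delta_u_term v v' k = (1/2) ^ (k+1) * min 1 (SUP r\<in>{0..real k}. \<bar>v r - v' r\<bar>)"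

lemma delta_u_eq_suminf: "delta_u v v' = suminf (delta_u_term v v')"
  unfolding delta_u_def delta_u_term_def by simp

lemma delta_u_term_le: "delta_u_term v v' k \<le> (1/2) ^ (k+1)"
  unfolding delta_u_term_def by (simp add: mult_left_le)

lemma delta_u_term_ge:
  assumes "C0 v" "C0 v'" "r \<in> {0..real k}"
  shows "(1/2) ^ (k+1) * min 1 \<bar>v r - v' r\<bar> \<le> delta_u_term v v' k"
proof -
  have "continuous_on {0..} (\<lambda>r. \<bar>v r - v' r\<bar>)"
    using assms unfolding C0_def by (intro continuous_intros) auto
  then have "bdd_above ((\<lambda>r. \<bar>v r - v' r\<bar>) ` {0..real k})"
    by (rule continuous_on_bdd_image_Icc(2)) auto
  then have "\<bar>v r - v' r\<bar> \<le> (SUP r\<in>{0..real k}. \<bar>v r - v' r\<bar>)"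
    by (rule cSUP_upper[OF assms(3)])
  then show ?thesis
    unfolding delta_u_term_def by (intro mult_left_mono min.mono) auto
qed

lemma delta_u_term_nonneg:
  assumes "C0 v" "C0 v'"
  shows "0 \<le> delta_u_term v v' k"
proof -
  have "0 \<le> (1/2::real) ^ (k+1) * min 1 \<bar>v 0 - v' 0\<bar>" by simp
  also have "\<dots> \<le> delta_u_term v v' k" using delta_u_term_ge[OF assms] by simp
  finally show ?thesis .
qed

lemma summable_delta_u_term:
  assumes "C0 v" "C0 v'"
  shows "summable (delta_u_term v v')"
proof (rule summable_comparison_test')
  show "summable (\<lambda>k. (1/2::real) ^ (k+1))" by simp
  show "norm (delta_u_term v v' k) \<le> (1/2) ^ (k+1)" for k
    using delta_u_term_le delta_u_term_nonneg[OF assms] by simp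
qed

lemma delta_u_nonneg: "C0 v \<Longrightarrow> C0 v' \<Longrightarrow> 0 \<le> delta_u v v'"
  unfolding delta_u_eq_suminf by (intro suminf_nonneg summable_delta_u_term delta_u_term_nonneg)

lemma delta_u_le_1:
  assumes "C0 v" "C0 v'"
  shows "delta_u v v' \<le> 1"
proof -
  have "(\<lambda>k. (1/2::real) ^ k) sums (1 / (1 - 1/2))" by (rule geometric_sums) simp
  then have "(\<lambda>k. (1/2) * (1/2::real) ^ k) sums ((1/2) * (1 / (1 - 1/2)))" by (rule sums_mult)
  then have "(\<lambda>k. (1/2::real) ^ (k+1)) sums 1" by simp
  then show ?thesis
    unfolding delta_u_eq_suminf
    using suminf_le[OF delta_u_term_le summable_delta_u_term[OF assms]] by (simp add: sums_iff)
qed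

lemma abs_diff_less_if_delta_u_less:
  assumes "C0 v" "C0 v'" "r \<in> {0..real k}" "2 ^ (k+1) * delta_u v v' < min 1 e"
  shows "\<bar>v r - v' r\<bar> < e"
proof -
  have "delta_u_term v v' k \<le> delta_u v v'"
    unfolding delta_u_eq_suminf
    using sum_le_suminf[OF summable_delta_u_term[OF assms(1,2)], of "{k}"]
      delta_u_term_nonneg[OF assms(1,2)] by simp
  then have "(1/2) ^ (k+1) * min 1 \<bar>v r - v' r\<bar> \<le> delta_u v v'"
    using delta_u_term_ge[OF assms(1-3)] by linarith
  then have "min 1 \<bar>v r - v' r\<bar> \<le> 2 ^ (k+1) * delta_u v v'"
    by (simp add: power_one_over divide_le_eq mult.commute)
  with assms(4) show ?thesis by linarith
qed

lemma continuous_on_path_cont: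
  assumes "path_cont \<zeta> w" "\<And>s. s \<in> {0..\<zeta>} \<Longrightarrow> C0 (w s)"
  shows "continuous_on ({0..\<zeta>} \<times> {0..real k}) (\<lambda>p. w (fst p) (snd p))"
  unfolding continuous_on_iff
proof (intro ballI allI impI)
  fix p and e :: real
  assume p: "p \<in> {0..\<zeta>} \<times> {0..real k}" and "0 < e"
  obtain s r where sr: "p = (s, r)" "s \<in> {0..\<zeta>}" "r \<in> {0..real k}" using p by auto
  have "continuous_on {0..} (w s)" using assms(2)[OF sr(2)] unfolding C0_def .
  then obtain d2 where d2: "d2 > 0"
    "\<And>r'. r' \<in> {0..} \<Longrightarrow> dist r' r < d2 \<Longrightarrow> dist (w s r') (w s r) < e/2"
    using sr(3) \<open>0 < e\<close> unfolding continuous_on_iff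
    by (meson atLeastAtMost_iff atLeast_iff half_gt_zero)
  obtain d1 where d1: "d1 > 0"
    "\<And>s'. s' \<in> {0..\<zeta>} \<Longrightarrow> \<bar>s' - s\<bar> < d1 \<Longrightarrow> delta_u (w s') (w s) < min 1 (e/2) / 2 ^ (k+1)"
    using assms(1) sr(2) \<open>0 < e\<close> unfolding path_cont_def
    by (metis divide_pos_pos min_less_iff_conj zero_less_one zero_less_power zero_less_numeral)
  show "\<exists>d>0. \<forall>p'\<in>{0..\<zeta>} \<times> {0..real k}. dist p' p < d \<longrightarrow>
          dist (w (fst p') (snd p')) (w (fst p) (snd p)) < e"
  proof (intro exI[of _ "min d1 d2"] conjI ballI impI)
    fix p' assume p': "p' \<in> {0..\<zeta>} \<times> {0..real k}" and near: "dist p' p < min d1 d2"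
    obtain s' r' where sr': "p' = (s', r')" "s' \<in> {0..\<zeta>}" "r' \<in> {0..real k}" using p' by auto
    have "dist s' s < d1" "dist r' r < d2"
      using near dist_fst_le[of p' p] dist_snd_le[of p' p] sr sr' by auto
    then have "2 ^ (k+1) * delta_u (w s') (w s) < min 1 (e/2)" "\<bar>w s r' - w s r\<bar> < e/2"
      using d1(2)[OF sr'(2)] d2(2)[of r'] sr'(3) by (auto simp: dist_real_def field_simps)
    moreover from this(1) have "\<bar>w s' r' - w s r'\<bar> < e/2"
      using assms(2) sr sr' by (intro abs_diff_less_if_delta_u_less) auto
    ultimately have "\<bar>w s' r' - w s r\<bar> < e" by arith
    then show "dist (w (fst p') (snd p')) (w (fst p) (snd p)) < e"
      using sr sr' by (simp add: dist_real_def)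
  qed (use d1 d2 in auto)
qed

lemma path_cont_equicontinuous:
  assumes "path_cont \<zeta> w" "\<And>s. s \<in> {0..\<zeta>} \<Longrightarrow> C0 (w s)" "e > 0"
  obtains \<delta> where "\<delta> > 0"
    "\<And>s x y. s \<in> {0..\<zeta>} \<Longrightarrow> x \<in> {0..real k} \<Longrightarrow> y \<in> {0..real k} \<Longrightarrow> \<bar>x - y\<bar> \<le> \<delta>
      \<Longrightarrow> \<bar>w s x - w s y\<bar> \<le> e"
proof -
  have "uniformly_continuous_on ({0..\<zeta>} \<times> {0..real k}) (\<lambda>p. w (fst p) (snd p))"
    using assms(1,2)
    by (intro compact_uniformly_continuous continuous_on_path_cont compact_Times compact_Icc)
  then obtain d where "d > 0" and d: "\<And>p p'. p \<in> {0..\<zeta>} \<times> {0..real k}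
      \<Longrightarrow> p' \<in> {0..\<zeta>} \<times> {0..real k} \<Longrightarrow> dist p' p < d \<Longrightarrow> dist (w (fst p') (snd p')) (w (fst p) (snd p)) < e"
    using uniformly_continuous_onE assms(3) by blast
  show ?thesis
  proof (rule that[of "d/2"])
    fix s x y assume "s \<in> {0..\<zeta>}" "x \<in> {0..real k}" "y \<in> {0..real k}" "\<bar>x - y\<bar> \<le> d/2"
    then show "\<bar>w s x - w s y\<bar> \<le> e"
      using d[of "(s, y)" "(s, x)"] \<open>d > 0\<close> by (simp add: dist_Pair_Pair dist_real_def)
  qed (use \<open>d > 0\<close> in simp)
qed

lemma uniform_limit_path_if_delta_u:
  assumes "uniform_limit S (\<lambda>n s. delta_u (wn n s) (w s)) (\<lambda>_. 0) F"
    and "\<And>n s. s \<in> S \<Longrightarrow> C0 (wn n s)" "\<And>s. s \<in> S \<Longrightarrow> C0 (w s)"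
  shows "uniform_limit (S \<times> {0..real k}) (\<lambda>n p. wn n (fst p) (snd p)) (\<lambda>p. w (fst p) (snd p)) F"
proof (rule uniform_limitI)
  fix e :: real assume "e > 0"
  have "\<forall>\<^sub>F n in F. \<forall>s\<in>S. dist (delta_u (wn n s) (w s)) 0 < min 1 e / 2 ^ (k+1)"
    by (rule uniform_limitD[OF assms(1)]) (use \<open>e > 0\<close> in simp)
  then show "\<forall>\<^sub>F n in F. \<forall>p\<in>S \<times> {0..real k}.
      dist (wn n (fst p) (snd p)) (w (fst p) (snd p)) < e"
  proof eventually_elim
    case (elim n)
    show ?case
    proof
      fix p assume p: "p \<in> S \<times> {0..real k}"
      have "0 \<le> delta_u (wn n (fst p)) (w (fst p))"
        using p assms(2,3) by (auto intro: delta_u_nonneg)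
      then have "2 ^ (k+1) * delta_u (wn n (fst p)) (w (fst p)) < min 1 e"
        using elim p by (auto simp: dist_real_def less_divide_eq mult.commute)
      then show "dist (wn n (fst p) (snd p)) (w (fst p) (snd p)) < e"
        using abs_diff_less_if_delta_u_less assms(2,3) p by (force simp: dist_real_def)
    qed
  qed
qed

lemma Delta_tendsto_0_imp_uniform_limit:
  assumes "0 \<le> \<zeta>" "\<And>n. continuous_on {0..\<zeta>} (hn n)" "continuous_on {0..\<zeta>} h"
    and "\<And>n s. s \<in> {0..\<zeta>} \<Longrightarrow> C0 (wn n s)" "\<And>s. s \<in> {0..\<zeta>} \<Longrightarrow> C0 (w s)"
    and "((\<lambda>n. Delta \<zeta> (hn n, wn n) (h, w)) \<longlongrightarrow> 0) F"
  shows "uniform_limit {0..\<zeta>} hn h F"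
    and "uniform_limit {0..\<zeta>} (\<lambda>n s. delta_u (wn n s) (w s)) (\<lambda>_. 0) F"
proof -
  define A where "A n = (SUP s\<in>{0..\<zeta>}. \<bar>hn n s - h s\<bar>)" for n
  define B where "B n = (SUP s\<in>{0..\<zeta>}. delta_u (wn n s) (w s))" for n
  have A: "\<bar>hn n s - h s\<bar> \<le> A n" if "s \<in> {0..\<zeta>}" for n s
  proof -
    have "continuous_on {0..\<zeta>} (\<lambda>s. \<bar>hn n s - h s\<bar>)"
      using assms(2,3) by (intro continuous_intros)
    then show ?thesis
      unfolding A_def by (intro cSUP_upper[OF that] continuous_on_bdd_image_Icc(2)) auto
  qed
  have B: "delta_u (wn n s) (w s) \<le> B n" if "s \<in> {0..\<zeta>}" for n s
    unfolding B_def using assms(4,5) delta_u_le_1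
    by (intro cSUP_upper[OF that] bdd_aboveI2[where M=1]) blast
  have nonneg: "0 \<le> A n" "0 \<le> B n" for n
    using A[of 0 n] B[of 0 n] assms(1,4,5) delta_u_nonneg[of "wn n 0" "w 0"] by force+
  have Delta_eq: "Delta \<zeta> (hn n, wn n) (h, w) = A n + B n" for n
    unfolding Delta_def A_def B_def by simp
  have "\<bar>hn n s - h s\<bar> \<le> Delta \<zeta> (hn n, wn n) (h, w)"
    "delta_u (wn n s) (w s) \<le> Delta \<zeta> (hn n, wn n) (h, w)" if "s \<in> {0..\<zeta>}" for n s
    using A[OF that, of n] B[OF that, of n] nonneg[of n] unfolding Delta_eq by linarith+
  then show "uniform_limit {0..\<zeta>} hn h F"
    and "uniform_limit {0..\<zeta>} (\<lambda>n s. delta_u (wn n s) (w s)) (\<lambda>_. 0) F"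
    using assms(4,5) delta_u_nonneg
    by (auto intro!: uniform_limit_if_dist_le[OF assms(6)] simp: dist_real_def)
qed

lemma m_h_le:
  assumes "bdd_below (f ` {min s1 s2..max s1 s2})" "t \<in> {min s1 s2..max s1 s2}"
  shows "m_h f s1 s2 \<le> f t"
  unfolding m_h_def using cINF_lower[OF assms] .

lemma m_h_nonneg:
  assumes "\<And>t. t \<in> {min s1 s2..max s1 s2} \<Longrightarrow> 0 \<le> f t"
  shows "0 \<le> m_h f s1 s2"
  unfolding m_h_def by (rule cINF_greatest) (use assms in auto)

lemma m_h_abs_diff_le:
  assumes "bdd_below (f ` {min s1 s2..max s1 s2})" "bdd_below (g ` {min s1 s2..max s1 s2})"
    and "\<And>t. t \<in> {min s1 s2..max s1 s2} \<Longrightarrow> \<bar>f t - g t\<bar> \<le> e"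
  shows "\<bar>m_h f s1 s2 - m_h g s1 s2\<bar> \<le> e"
  unfolding m_h_def using assms by (intro cINF_abs_diff_le) fastforce+

lemma d_tree_abs_diff_le:
  assumes "bdd_below (f ` {min s1 s2..max s1 s2})" "bdd_below (g ` {min s1 s2..max s1 s2})"
    and "\<And>t. t \<in> {min s1 s2..max s1 s2} \<Longrightarrow> \<bar>f t - g t\<bar> \<le> e"
  shows "\<bar>d_tree f s1 s2 - d_tree g s1 s2\<bar> \<le> 4 * e"
  using assms(3)[of s1] assms(3)[of s2] m_h_abs_diff_le[OF assms]
  unfolding d_tree_def by auto

lemma uniform_limit_d_tree:
  assumes "uniform_limit {a..b} hn h F"
    and "\<And>n. continuous_on {a..b} (hn n)" "continuous_on {a..b} h"
  shows "uniform_limit ({a..b} \<times> {a..b}) (\<lambda>n p. d_tree (hn n) (fst p) (snd p))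
           (\<lambda>p. d_tree h (fst p) (snd p)) F"
proof (rule uniform_limitI)
  fix e :: real assume "e > 0"
  have "\<forall>\<^sub>F n in F. \<forall>x\<in>{a..b}. dist (hn n x) (h x) < e / 5"
    by (rule uniform_limitD[OF assms(1)]) (use \<open>e > 0\<close> in simp)
  then show "\<forall>\<^sub>F n in F. \<forall>p\<in>{a..b} \<times> {a..b}.
      dist (d_tree (hn n) (fst p) (snd p)) (d_tree h (fst p) (snd p)) < e"
  proof eventually_elim
    case (elim n)
    show ?case
    proof (intro ballI)
      fix p assume p: "p \<in> {a..b} \<times> {a..b}"
      let ?J = "{min (fst p) (snd p)..max (fst p) (snd p)}"
      have J: "?J \<subseteq> {a..b}" using p by auto
      have "\<bar>d_tree (hn n) (fst p) (snd p) - d_tree h (fst p) (snd p)\<bar> \<le> 4 * (e / 5)"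
        using elim J continuous_on_bdd_image_Icc(1)[OF assms(2) J]
          continuous_on_bdd_image_Icc(1)[OF assms(3) J]
        by (intro d_tree_abs_diff_le) (auto simp: dist_real_def less_imp_le subset_iff)
      then show "dist (d_tree (hn n) (fst p) (snd p)) (d_tree h (fst p) (snd p)) < e"
        using \<open>e > 0\<close> by (simp add: dist_real_def)
    qed
  qed
qed

lemma d_snake_abs_diff_le:
  fixes h h' :: "real \<Rightarrow> real" and w w' :: "real \<Rightarrow> real \<Rightarrow> real"
  assumes s12: "s1 \<in> {0..\<zeta>}" "s2 \<in> {0..\<zeta>}"
    and cont: "continuous_on {0..\<zeta>} h" "continuous_on {0..\<zeta>} h'"
    and range: "\<And>s. s \<in> {0..\<zeta>} \<Longrightarrow> h s \<in> {0..K} \<and> h' s \<in> {0..K}"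
    and heights: "\<And>s. s \<in> {0..\<zeta>} \<Longrightarrow> \<bar>h s - h' s\<bar> \<le> \<delta>"
    and paths: "\<And>s. s \<in> {0..\<zeta>} \<Longrightarrow> C0 (w s) \<and> C0 (w' s)"
    and modulus: "\<And>s x y. s \<in> {0..\<zeta>} \<Longrightarrow> x \<in> {0..K} \<Longrightarrow> y \<in> {0..K} \<Longrightarrow> \<bar>x - y\<bar> \<le> \<delta>
      \<Longrightarrow> \<bar>w s x - w s y\<bar> \<le> e"
    and close: "\<And>s r. s \<in> {0..\<zeta>} \<Longrightarrow> r \<in> {0..K} \<Longrightarrow> \<bar>w s r - w' s r\<bar> \<le> e"
  shows "\<bar>d_snake h w s1 s2 - d_snake h' w' s1 s2\<bar> \<le> 8 * e"
proof -
  let ?J = "{min s1 s2..max s1 s2}"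
  have J: "?J \<subseteq> {0..\<zeta>}" using s12 by auto
  have bdd: "bdd_below (h ` ?J)" "bdd_below (h' ` ?J)"
    using continuous_on_bdd_image_Icc(1)[OF cont(1) J] continuous_on_bdd_image_Icc(1)[OF cont(2) J]
    .
  have s: "s \<in> ?J" "s \<in> {0..\<zeta>}" if "s \<in> {s1, s2}" for s using that s12 by auto
  have "0 \<le> h t" "0 \<le> h' t" if "t \<in> ?J" for t using range[OF subsetD[OF J that]] by auto
  then have m_h_range:
      "0 \<le> m_h h s1 s2 \<and> m_h h s1 s2 \<le> h s" "0 \<le> m_h h' s1 s2 \<and> m_h h' s1 s2 \<le> h' s"
    if "s \<in> {s1, s2}" for s
    using m_h_le[OF bdd(1) s(1)[OF that]] m_h_le[OF bdd(2) s(1)[OF that]]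
      m_h_nonneg[of s1 s2 h] m_h_nonneg[of s1 s2 h'] by blast+
  have "\<bar>m_h h s1 s2 - m_h h' s1 s2\<bar> \<le> \<delta>"
    using heights subsetD[OF J] by (intro m_h_abs_diff_le[OF bdd]) blast
  have top: "\<bar>w s (h s) - w' s (h' s)\<bar> \<le> 2 * e" if "s \<in> {0..\<zeta>}" for s
  proof -
    have "\<bar>w s (h s) - w s (h' s)\<bar> \<le> e" "\<bar>w s (h' s) - w' s (h' s)\<bar> \<le> e"
      using modulus[OF that] heights[OF that] close[OF that] range[OF that] by auto
    then show ?thesis by arith
  qed
  have inf:
      "\<bar>(INF r\<in>{m_h h s1 s2..h s}. w s r) - (INF r\<in>{m_h h' s1 s2..h' s}. w' s r)\<bar> \<le> 2 * e"
    if "s \<in> {s1, s2}" for s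
  proof (rule abs_INF_Icc_diff_le[where I = "{0..K}" and \<delta> = \<delta>])
    show sub: "{m_h h s1 s2..h s} \<subseteq> {0..K}" "{m_h h' s1 s2..h' s} \<subseteq> {0..K}"
      using m_h_range[OF that] range[OF s(2)[OF that]] by auto
    have "continuous_on {0..K} (w s)" "continuous_on {0..K} (w' s)"
      using paths[OF s(2)[OF that]] C0_continuous_on_Icc by auto
    from continuous_on_bdd_image_Icc(1)[OF this(1) sub(1)]
      continuous_on_bdd_image_Icc(1)[OF this(2) sub(2)]
    show "bdd_below (w s ` {m_h h s1 s2..h s})" "bdd_below (w' s ` {m_h h' s1 s2..h' s})" .
  next
    show "m_h h s1 s2 \<le> h s" "m_h h' s1 s2 \<le> h' s" using m_h_range[OF that] by auto
    show "\<bar>m_h h s1 s2 - m_h h' s1 s2\<bar> \<le> \<delta>" by fact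
    show "\<bar>h s - h' s\<bar> \<le> \<delta>" using heights[OF s(2)[OF that]] .
    show "\<And>x y. x \<in> {0..K} \<Longrightarrow> y \<in> {0..K} \<Longrightarrow> \<bar>x - y\<bar> \<le> \<delta> \<Longrightarrow> \<bar>w s x - w s y\<bar> \<le> e"
      using modulus[OF s(2)[OF that]] .
    show "\<And>r. r \<in> {0..K} \<Longrightarrow> \<bar>w s r - w' s r\<bar> \<le> e"
      using close[OF s(2)[OF that]] .
  qed
  have "\<bar>M_hw h w s1 s2 - M_hw h' w' s1 s2\<bar> \<le> 2 * e"
    unfolding M_hw_def using inf by (intro abs_min_diff_le) auto
  then show ?thesis
    using top[OF s12(1)] top[OF s12(2)] unfolding d_snake_def by arith
qed

lemma uniform_limit_d_snake:
  assumes hlim: "uniform_limit {0..\<zeta>} hn h sequentially"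
    and hn: "\<And>n. continuous_on {0..\<zeta>} (hn n)" "\<And>n s. s \<in> {0..\<zeta>} \<Longrightarrow> 0 \<le> hn n s"
    and h: "continuous_on {0..\<zeta>} h"
    and wn: "\<And>n s. s \<in> {0..\<zeta>} \<Longrightarrow> C0 (wn n s)"
    and w: "\<And>s. s \<in> {0..\<zeta>} \<Longrightarrow> C0 (w s)" "path_cont \<zeta> w"
    and wlim: "uniform_limit {0..\<zeta>} (\<lambda>n s. delta_u (wn n s) (w s)) (\<lambda>_. 0) sequentially"
  shows "uniform_limit ({0..\<zeta>} \<times> {0..\<zeta>}) (\<lambda>n p. d_snake (hn n) (wn n) (fst p) (snd p))
           (\<lambda>p. d_snake h w (fst p) (snd p)) sequentially"
proof (rule uniform_limitI)
  fix \<epsilon> :: real assume "\<epsilon> > 0"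
  define e where "e = \<epsilon> / 9"
  have "e > 0" using \<open>\<epsilon> > 0\<close> by (simp add: e_def)
  have h_nonneg: "0 \<le> h s" if "s \<in> {0..\<zeta>}" for s
    using uniform_limit_nonneg[OF hlim hn(2) that] .
  obtain K :: nat where h_le: "\<And>s. s \<in> {0..\<zeta>} \<Longrightarrow> h s + 1 \<le> real K"
    using continuous_on_Icc_nat_bound[OF h] by blast
  obtain \<delta> where "\<delta> > 0" and modulus: "\<And>s x y. s \<in> {0..\<zeta>} \<Longrightarrow> x \<in> {0..real K}
      \<Longrightarrow> y \<in> {0..real K} \<Longrightarrow> \<bar>x - y\<bar> \<le> \<delta> \<Longrightarrow> \<bar>w s x - w s y\<bar> \<le> e"
    using path_cont_equicontinuous[OF w(2,1) \<open>e > 0\<close>] by blast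
  have "\<forall>\<^sub>F n in sequentially. \<forall>s\<in>{0..\<zeta>}. dist (hn n s) (h s) < min \<delta> 1"
    by (rule uniform_limitD[OF hlim]) (use \<open>\<delta> > 0\<close> in simp)
  moreover have "\<forall>\<^sub>F n in sequentially. \<forall>p\<in>{0..\<zeta>} \<times> {0..real K}.
      dist (wn n (fst p) (snd p)) (w (fst p) (snd p)) < e"
    using uniform_limitD[OF uniform_limit_path_if_delta_u[OF wlim wn w(1)]] \<open>e > 0\<close> by blast
  ultimately show "\<forall>\<^sub>F n in sequentially. \<forall>p\<in>{0..\<zeta>} \<times> {0..\<zeta>}.
      dist (d_snake (hn n) (wn n) (fst p) (snd p)) (d_snake h w (fst p) (snd p)) < \<epsilon>"
  proof eventually_elim
    case (elim n)
    have heights: "\<bar>h s - hn n s\<bar> \<le> \<delta>" "hn n s \<le> h s + 1" if "s \<in> {0..\<zeta>}" for s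
      using bspec[OF elim(1) that] by (auto simp: dist_real_def abs_less_iff)
    have close: "\<bar>w s r - wn n s r\<bar> \<le> e" if "s \<in> {0..\<zeta>}" "r \<in> {0..real K}" for s r
      using elim(2) that by (force simp: dist_real_def abs_minus_commute)
    have range: "h s \<in> {0..real K} \<and> hn n s \<in> {0..real K}" if "s \<in> {0..\<zeta>}" for s
      using h_nonneg[OF that] h_le[OF that] hn(2)[OF that] heights(2)[OF that] by auto
    show ?case
    proof
      fix p assume "p \<in> {0..\<zeta>} \<times> {0..\<zeta>}"
      then have "\<bar>d_snake h w (fst p) (snd p) - d_snake (hn n) (wn n) (fst p) (snd p)\<bar> \<le> 8 * e"
        using w(1) wn
        by (intro d_snake_abs_diff_le[OF _ _ h hn(1) range heights(1) _ modulus close]) auto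
      then show "dist (d_snake (hn n) (wn n) (fst p) (snd p)) (d_snake h w (fst p) (snd p)) < \<epsilon>"
        using \<open>\<epsilon> > 0\<close> by (simp add: e_def dist_real_def abs_minus_commute)
    qed
  qed
qed

theorem lemma4p20:
  fixes \<zeta> :: real
    and hn :: "nat \<Rightarrow> real \<Rightarrow> real" and wn :: "nat \<Rightarrow> real \<Rightarrow> real \<Rightarrow> real"
    and h :: "real \<Rightarrow> real" and w :: "real \<Rightarrow> real \<Rightarrow> real"
  assumes "\<zeta> > 0"
    and "\<And>n. is_snake \<zeta> (hn n) (wn n)"
    and "continuous_on {0..\<zeta>} h"
    and "\<forall>s\<in>{0..\<zeta>}. C0 (w s)" and "path_cont \<zeta> w"
    and "(\<lambda>n. Delta \<zeta> (hn n, wn n) (h, w)) \<longlonglongrightarrow> 0"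
  shows "((\<lambda>n. SUP p\<in>{0..\<zeta>}\<times>{0..\<zeta>}. \<bar>d_tree (hn n) (fst p) (snd p) - d_tree h (fst p) (snd p)\<bar>)
            \<longlonglongrightarrow> 0) \<and>
         ((\<lambda>n. SUP p\<in>{0..\<zeta>}\<times>{0..\<zeta>}.
              \<bar>d_snake (hn n) (wn n) (fst p) (snd p) - d_snake h w (fst p) (snd p)\<bar>) \<longlonglongrightarrow> 0)"
proof -
  have hn: "\<And>n. continuous_on {0..\<zeta>} (hn n)" "\<And>n s. s \<in> {0..\<zeta>} \<Longrightarrow> 0 \<le> hn n s"
    and wn: "\<And>n s. s \<in> {0..\<zeta>} \<Longrightarrow> C0 (wn n s)"
    using assms(2) unfolding is_snake_def by blast+
  have w: "\<And>s. s \<in> {0..\<zeta>} \<Longrightarrow> C0 (w s)" using assms(4) by blast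
  note limits =
    Delta_tendsto_0_imp_uniform_limit[OF less_imp_le[OF assms(1)] hn(1) assms(3) wn w assms(6)]
  have tree: "uniform_limit ({0..\<zeta>} \<times> {0..\<zeta>}) (\<lambda>n p. d_tree (hn n) (fst p) (snd p))
      (\<lambda>p. d_tree h (fst p) (snd p)) sequentially"
    using uniform_limit_d_tree[OF limits(1) hn(1) assms(3)] .
  have snake: "uniform_limit ({0..\<zeta>} \<times> {0..\<zeta>}) (\<lambda>n p. d_snake (hn n) (wn n) (fst p) (snd p))
      (\<lambda>p. d_snake h w (fst p) (snd p)) sequentially"
    using uniform_limit_d_snake[OF limits(1) hn assms(3) wn w assms(5) limits(2)] .
  have "{0..\<zeta>} \<times> {0..\<zeta>} \<noteq> {}" using assms(1) by simp
  with tree snake show ?thesis by (simp add: uniform_limit_imp_SUP_abs_diff_tendsto_0)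
qed

end
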